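(* Let $\Gamma\subseteq\mathbb R^n$ be an open convex set, $S\subseteq\Gamma$ a nonempty convex set, and $f:\Gamma\to\mathbb R$ a Fréchet differentiable function that is quasiconvex on $\Gamma$. Let $\bar S=\arg\min\{f(x)\mid x\in S\}$, and let $x,y\in\bar S$ with $\nabla f(x)\neq 0$ and $\nabla f(y)\neq 0$. Then for every $d\in\mathbb R^n$, \[ \nabla f(x)^T d<0\quad\Longrightarrow\quad \nabla f(y)^T d\le 0 . \]
   Context: A function $f:\Gamma\to\mathbb R$ on a convex set $\Gamma\subseteq\mathbb R^n$ is quasiconvex on $\Gamma$ iff $f(x+t(y-x))\le\max\{f(x),f(y)\}$ for all $x,y\in\Gamma$ and $t\in[0,1]$. $\bar S$ denotes the solution set of the problem of minimizing $f$ over $S$. *)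

theory Defs
  imports "HOL-Analysis.Analysis"
begin

definition quasiconvex_on :: "('a::real_vector) set \<Rightarrow> ('a \<Rightarrow> real) \<Rightarrow> bool" where
  "quasiconvex_on \<Gamma> f \<longleftrightarrow>
     (\<forall>x\<in>\<Gamma>. \<forall>y\<in>\<Gamma>. \<forall>t::real. 0 \<le> t \<and> t \<le> 1 \<longrightarrow>
        f (x + t *\<^sub>R (y - x)) \<le> max (f x) (f y))"

definition argmin_set :: "('a \<Rightarrow> real) \<Rightarrow> 'a set \<Rightarrow> 'a set" where
  "argmin_set f S = {x \<in> S. \<forall>z\<in>S. f x \<le> f z}"

definition grad :: "(real^'n \<Rightarrow> real) \<Rightarrow> real^'n \<Rightarrow> real^'n" where
  "grad f x = (\<chi> i. frechet_derivative f (at x) (axis i 1))"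

end

theory Submission
  imports Defs
begin

text \<open>
  Suppose \<open>\<nabla>f(x)\<^sup>T d < 0 < \<nabla>f(y)\<^sup>T d\<close>. A short step \<open>p = x + h d\<close> gives \<open>f p < f x = f y\<close>.
  First-order optimality of \<open>y\<close> over the convex set \<open>S \<ni> x\<close> gives
  \<open>\<nabla>f(y)\<^sup>T (x - y) \<ge> 0\<close>, hence \<open>\<nabla>f(y)\<^sup>T (p - y) > 0\<close>: \<open>f\<close> strictly increases when
  leaving \<open>y\<close> towards the lower point \<open>p\<close>, which quasiconvexity forbids.
\<close>

lemma has_derivative_grad:
  fixes f :: "real^'n \<Rightarrow> real"
  assumes "f differentiable (at z)"
  shows "(f has_derivative (\<lambda>w. grad f z \<bullet> w)) (at z)"
proof -
  let ?D = "frechet_derivative f (at z)"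
  have D: "(f has_derivative ?D) (at z)"
    using assms frechet_derivative_works by blast
  then have lin: "linear ?D"
    by (rule has_derivative_linear)
  have "?D w = grad f z \<bullet> w" for w
  proof -
    have "?D w = ?D (\<Sum>i\<in>UNIV. w$i *s axis i 1)"
      by (simp add: basis_expansion)
    also have "\<dots> = (\<Sum>i\<in>UNIV. w$i * ?D (axis i 1))"
      by (simp add: scalar_mult_eq_scaleR linear_sum[OF lin] linear_scale[OF lin])
    also have "\<dots> = grad f z \<bullet> w"
      by (simp add: grad_def inner_vec_def mult.commute)
    finally show ?thesis .
  qed
  then have "?D = (\<lambda>w. grad f z \<bullet> w)"
    by (rule ext)
  with D show ?thesis
    by simp
qed

lemma has_real_derivative_along_line:
  fixes f :: "real^'n \<Rightarrow> real"
  assumes "f differentiable (at z)"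
  shows "((\<lambda>s. f (z + s *\<^sub>R w)) has_real_derivative grad f z \<bullet> w) (at 0)"
proof -
  have "((\<lambda>s. z + s *\<^sub>R w) has_derivative (\<lambda>s. s *\<^sub>R w)) (at 0)"
    by (auto intro!: derivative_eq_intros)
  moreover have "(f has_derivative (\<lambda>w. grad f z \<bullet> w)) (at (z + 0 *\<^sub>R w))"
    using has_derivative_grad[OF assms] by simp
  ultimately have "((\<lambda>s. f (z + s *\<^sub>R w)) has_derivative (\<lambda>s. grad f z \<bullet> (s *\<^sub>R w))) (at 0)"
    by (rule has_derivative_compose[unfolded o_def])
  then show ?thesis
    by (simp add: has_field_derivative_def mult_commute_abs)
qed

lemma eventually_descent_along_line:
  fixes f :: "real^'n \<Rightarrow> real"
  assumes "f differentiable (at z)" and "grad f z \<bullet> w < 0"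
  shows "\<forall>\<^sub>F s in at_right 0. f (z + s *\<^sub>R w) < f z"
  using DERIV_neg_dec_right[OF has_real_derivative_along_line[OF assms(1)] assms(2)]
  by (auto simp: eventually_at_right_field)

lemma eventually_ascent_along_line:
  fixes f :: "real^'n \<Rightarrow> real"
  assumes "f differentiable (at z)" and "grad f z \<bullet> w > 0"
  shows "\<forall>\<^sub>F s in at_right 0. f z < f (z + s *\<^sub>R w)"
  using DERIV_pos_inc_right[OF has_real_derivative_along_line[OF assms(1)] assms(2)]
  by (auto simp: eventually_at_right_field)

lemma eventually_in_unit_interval: "\<forall>\<^sub>F s in at_right (0::real). 0 < s \<and> s \<le> 1"
  by (auto simp: eventually_at_right_field intro: exI[of _ 1])

lemma eventually_along_line_in_open:
  fixes z w :: "'a::real_normed_vector"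
  assumes "open \<Gamma>" and "z \<in> \<Gamma>"
  shows "\<forall>\<^sub>F s in at_right 0. z + s *\<^sub>R w \<in> \<Gamma>"
proof -
  have "((\<lambda>s. z + s *\<^sub>R w) \<longlongrightarrow> z + 0 *\<^sub>R w) (at_right 0)"
    by (intro tendsto_intros)
  then show ?thesis
    using assms by (auto intro: topological_tendstoD)
qed

lemma argmin_set_grad_inner_nonneg:
  fixes f :: "real^'n \<Rightarrow> real"
  assumes "convex S" and "y \<in> argmin_set f S" and "x \<in> S"
    and "f differentiable (at y)"
  shows "grad f y \<bullet> (x - y) \<ge> 0"
proof (rule ccontr)
  assume "\<not> ?thesis"
  then have "\<forall>\<^sub>F s in at_right 0. f (y + s *\<^sub>R (x - y)) < f y \<and> 0 < s \<and> s \<le> 1"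
    using eventually_descent_along_line[OF assms(4)] eventually_in_unit_interval
    by (auto intro: eventually_conj)
  then obtain s where s: "f (y + s *\<^sub>R (x - y)) < f y" "0 < s" "s \<le> 1"
    using eventually_happens by fastforce
  have "y + s *\<^sub>R (x - y) = (1 - s) *\<^sub>R y + s *\<^sub>R x"
    by (simp add: algebra_simps)
  then have "y + s *\<^sub>R (x - y) \<in> S"
    using assms(1-3) s by (simp add: convex_def argmin_set_def)
  with s(1) assms(2) show False
    by (fastforce simp: argmin_set_def)
qed

lemma quasiconvex_on_grad_inner_nonpos:
  fixes f :: "real^'n \<Rightarrow> real"
  assumes "quasiconvex_on \<Gamma> f" and "y \<in> \<Gamma>" and "p \<in> \<Gamma>" and "f p \<le> f y"
    and "f differentiable (at y)"
  shows "grad f y \<bullet> (p - y) \<le> 0"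
proof (rule ccontr)
  assume "\<not> ?thesis"
  then have "\<forall>\<^sub>F s in at_right 0. f y < f (y + s *\<^sub>R (p - y)) \<and> 0 < s \<and> s \<le> 1"
    using eventually_ascent_along_line[OF assms(5)] eventually_in_unit_interval
    by (auto intro: eventually_conj)
  then obtain s where s: "f y < f (y + s *\<^sub>R (p - y))" "0 < s" "s \<le> 1"
    using eventually_happens by fastforce
  moreover have "f (y + s *\<^sub>R (p - y)) \<le> max (f y) (f p)"
    using assms(1-3) s by (simp add: quasiconvex_on_def)
  ultimately show False
    using assms(4) by simp
qed

theorem lemma3:
  fixes f :: "real^'n \<Rightarrow> real"
    and \<Gamma> S :: "(real^'n) set"
    and x y d :: "real^'n"
  assumes "open \<Gamma>" and "convex \<Gamma>"
    and "S \<subseteq> \<Gamma>" and "S \<noteq> {}" and "convex S"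
    and "\<forall>z\<in>\<Gamma>. f differentiable (at z)"
    and "quasiconvex_on \<Gamma> f"
    and "x \<in> argmin_set f S" and "y \<in> argmin_set f S"
    and "grad f x \<noteq> 0" and "grad f y \<noteq> 0"
  shows "grad f x \<bullet> d < 0 \<longrightarrow> grad f y \<bullet> d \<le> 0"
proof (intro impI, rule ccontr)
  assume descent: "grad f x \<bullet> d < 0" and "\<not> grad f y \<bullet> d \<le> 0"
  have x: "x \<in> S" "x \<in> \<Gamma>" and y: "y \<in> S" "y \<in> \<Gamma>"
    using assms(3,8,9) by (auto simp: argmin_set_def)
  have "f x = f y"
    using assms(8,9) by (auto simp: argmin_set_def intro: order_antisym)
  have "\<forall>\<^sub>F h in at_right 0. f (x + h *\<^sub>R d) < f x \<and> x + h *\<^sub>R d \<in> \<Gamma> \<and> 0 < h"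
    using eventually_descent_along_line[OF _ descent] eventually_along_line_in_open[OF assms(1) x(2)]
      eventually_at_right_less assms(6) x(2)
    by (intro eventually_conj) (auto elim: eventually_mono)
  then obtain h where h: "f (x + h *\<^sub>R d) < f x" "x + h *\<^sub>R d \<in> \<Gamma>" "0 < h"
    using eventually_happens by fastforce
  have "grad f y \<bullet> (x + h *\<^sub>R d - y) = grad f y \<bullet> (x - y) + h * (grad f y \<bullet> d)"
    by (simp add: inner_diff_right inner_add_right)
  also have "\<dots> > 0"
    using argmin_set_grad_inner_nonneg[OF assms(5,9) x(1)] assms(6) y(2) h(3)
      \<open>\<not> grad f y \<bullet> d \<le> 0\<close> by (simp add: add_nonneg_pos)
  finally show False
    using quasiconvex_on_grad_inner_nonpos[OF assms(7) y(2) h(2)] h(1) \<open>f x = f y\<close> assms(6) y(2)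
    by force
qed

end
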